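(* Let $\mathbf Y=\mathcal X\boldsymbol\beta+\boldsymbol\epsilon$, where $\boldsymbol\beta\in\mathbb R^d$, $\mathcal X\in\mathbb R^{m\times d}$ with $\mathcal X^\intercal\mathcal X$ nonsingular, and $\boldsymbol\epsilon\sim\mathcal N(\mathbf 0,\sigma^2\mathcal I)$ with $\mathcal I$ the $m\times m$ identity. Let $\mathbf Y_1,\mathbf Y_2,\dots$ be independent samples of $\mathbf Y$, and let $T$ be a random variable independent of $\sum_{\ell=1}^n\mathbf Y_\ell$ and of $\{\mathbf Y_\ell:\ell\ge n+1\}$. Suppose $N\ge n$ is an integer-valued function of $T$ and no other random variables, and let $\widehat{\boldsymbol\beta}=N^{-1}(\mathcal X^\intercal\mathcal X)^{-1}\mathcal X^\intercal\sum_{\ell=1}^N\mathbf Y_\ell$. Then for any $\mathbf x\in\mathbb R^d$: (i) conditionally on $T$, $\mathbf x^\intercal\widehat{\boldsymbol\beta}\sim\mathcal N\big(\mathbf x^\intercal\boldsymbol\beta,\frac{\sigma^2}{N}\mathbf x^\intercal(\mathcal X^\intercal\mathcal X)^{-1}\mathbf x\big)$; (ii) $\frac{\sqrt N(\mathbf x^\intercal\widehat{\boldsymbol\beta}-\mathbf x^\intercal\boldsymbol\beta)}{\sigma\sqrt{\mathbf x^\intercal(\mathcal X^\intercal\mathcal X)^{-1}\mathbf x}}$ is independent of $T$ and has the standard normal distribution. *)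

theory Defs
  imports "HOL-Probability.Probability"
begin

definition betahat ::
  "real^'d^'m \<Rightarrow> (nat \<Rightarrow> 'a \<Rightarrow> real^'m) \<Rightarrow> nat \<Rightarrow> 'a \<Rightarrow> real^'d" where
  "betahat X Y N \<omega> =
     (1 / real N) *\<^sub>R ((matrix_inv (transpose X ** X) ** transpose X) *v (\<Sum>l\<in>{1..N}. Y l \<omega>))"

text \<open>The Gaussian measure N(mu, s^2) on the real line (s = standard deviation).\<close>
definition normal_measure :: "real \<Rightarrow> real \<Rightarrow> real measure" where
  "normal_measure mu s = density lborel (normal_density mu s)"

text \<open>Independence of two random variables with possibly different codomain types
  (the library's indep_var forces a common codomain type); this is literally the
  characterisation indep_var_eq of the library, i.e. independence of the generated
  sigma-algebras.\<close>
definition indep_rv :: "'a measure \<Rightarrow> 'b measure \<Rightarrow> ('a \<Rightarrow> 'b) \<Rightarrow> 'c measure \<Rightarrow> ('a \<Rightarrow> 'c) \<Rightarrow> bool" where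
  "indep_rv M S X T Y \<longleftrightarrow>
     X \<in> measurable M S \<and> Y \<in> measurable M T \<and>
     prob_space.indep_set M
       (sigma_sets (space M) {X -` A \<inter> space M | A. A \<in> sets S})
       (sigma_sets (space M) {Y -` A \<inter> space M | A. A \<in> sets T})"

end

theory Submission
  imports Defs
begin

text \<open>The row vector a = x^T (X^T X)^-1 X^T satisfies a X = x^T and |a|^2 = x^T (X^T X)^-1 x,
  so for a fixed sample size k the statistic x^T betahat_k = (a Y_1 + ... + a Y_k) / k is Gaussian
  with mean x^T beta and variance sigma^2 |a|^2 / k. For k >= n it is a function of
  W = (Y_1 + ... + Y_n, Y_(n+1), Y_(n+2), ...), which is independent of T. Splitting an event
  according to the value k of N = g(T), independence factorises each piece as
  P(T in A, N = k) P(x^T betahat_k in B), and summing over k yields the conditional law (i).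
  After standardisation the law of each piece no longer depends on k, so the same computation
  shows that the standardised statistic is standard normal and independent of T (ii).\<close>

lemma matrix_inv_mul:
  fixes A :: "'a::semiring_1^'n^'n"
  assumes "invertible A"
  shows "A ** matrix_inv A = mat 1" and "matrix_inv A ** A = mat 1"
  using someI_ex[OF assms[unfolded invertible_def]] by (auto simp: matrix_inv_def)

lemma transpose_matrix_inv_symmetric:
  fixes A :: "'a::comm_semiring_1^'n^'n"
  assumes "invertible A" and "transpose A = A"
  shows "transpose (matrix_inv A) = matrix_inv A"
proof -
  have "transpose (matrix_inv A) = transpose (matrix_inv A) ** (A ** matrix_inv A)"
    using matrix_inv_mul(1)[OF assms(1)] by simp
  also have "\<dots> = transpose (A ** matrix_inv A) ** matrix_inv A"
    using assms(2) by (simp add: matrix_transpose_mul matrix_mul_assoc)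
  finally show ?thesis
    using matrix_inv_mul(1)[OF assms(1)] by simp
qed

lemma least_squares_left_inverse:
  fixes X :: "real^'d^'m"
  assumes "invertible (transpose X ** X)"
  shows "(matrix_inv (transpose X ** X) ** transpose X) ** X = mat 1"
  using matrix_inv_mul(2)[OF assms] by (simp add: matrix_mul_assoc)

lemma least_squares_gram:
  fixes X :: "real^'d^'m"
  assumes "invertible (transpose X ** X)"
  shows "(matrix_inv (transpose X ** X) ** transpose X) ** transpose (matrix_inv (transpose X ** X) ** transpose X)
         = matrix_inv (transpose X ** X)"
proof -
  have "transpose (matrix_inv (transpose X ** X)) = matrix_inv (transpose X ** X)"
    using assms by (intro transpose_matrix_inv_symmetric) (simp_all add: matrix_transpose_mul)
  then show ?thesis
    using matrix_inv_mul(2)[OF assms] by (simp add: matrix_transpose_mul matrix_mul_assoc)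
qed

lemma least_squares_row_norm:
  fixes X :: "real^'d^'m" and x :: "real^'d"
  defines "L \<equiv> matrix_inv (transpose X ** X) ** transpose X"
  assumes "invertible (transpose X ** X)"
  shows "(x v* L) \<bullet> (x v* L) = x \<bullet> (matrix_inv (transpose X ** X) *v x)"
proof -
  have "(x v* L) \<bullet> (x v* L) = x \<bullet> (L *v (transpose L *v x))"
    by (simp add: dot_lmul_matrix)
  also have "\<dots> = x \<bullet> ((L ** transpose L) *v x)"
    by (simp only: matrix_vector_mul_assoc)
  also have "\<dots> = x \<bullet> (matrix_inv (transpose X ** X) *v x)"
    using least_squares_gram[OF assms(2)] unfolding L_def by (simp only:)
  finally show ?thesis .
qed

lemma least_squares_row_nonzero:
  fixes X :: "real^'d^'m" and x :: "real^'d"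
  assumes "invertible (transpose X ** X)" and "x \<noteq> 0"
  shows "x v* (matrix_inv (transpose X ** X) ** transpose X) \<noteq> 0"
proof
  assume "x v* (matrix_inv (transpose X ** X) ** transpose X) = 0"
  then have "x = 0 v* X"
    using least_squares_left_inverse[OF assms(1)] by (metis vector_matrix_mul_assoc vector_matrix_mul_rid)
  with assms(2) show False by simp
qed

lemma inner_matrix_inv_gram_pos:
  fixes X :: "real^'d^'m" and x :: "real^'d"
  assumes "invertible (transpose X ** X)" and "x \<noteq> 0"
  shows "0 < x \<bullet> (matrix_inv (transpose X ** X) *v x)"
  using least_squares_row_norm[OF assms(1), of x] least_squares_row_nonzero[OF assms] inner_gt_zero_iff by metis

lemma measure_distributed_normal:
  assumes "distributed M lborel Z (normal_density \<mu> s)" and "B \<in> sets borel"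
  shows "measure M {\<omega>\<in>space M. Z \<omega> \<in> B} = measure (normal_measure \<mu> s) B"
proof -
  have "measure (normal_measure \<mu> s) B = measure (distr M lborel Z) B"
    using assms(1) by (simp add: normal_measure_def distributed_def)
  also have "\<dots> = measure M {\<omega>\<in>space M. Z \<omega> \<in> B}"
    using assms by (subst measure_distr) (auto simp: distributed_def vimage_def Int_def conj_commute)
  finally show ?thesis ..
qed

lemma Int_stable_vimage: "Int_stable {X -` A \<inter> space M | A. A \<in> sets S}"
  unfolding Int_stable_def
proof clarify
  fix A B assume "A \<in> sets S" "B \<in> sets S"
  then show "\<exists>C. X -` A \<inter> space M \<inter> (X -` B \<inter> space M) = X -` C \<inter> space M \<and> C \<in> sets S"
    by (intro exI[of _ "A \<inter> B"]) auto
qed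

context prob_space
begin

lemma distributed_inner_indep_normal:
  fixes Y :: "'a \<Rightarrow> real^'m" and a \<mu> :: "real^'m"
  assumes \<sigma>: "\<sigma> > 0" and "a \<noteq> 0"
    and indep: "indep_vars (\<lambda>_. borel) (\<lambda>i \<omega>. Y \<omega> $ i) UNIV"
    and normal: "\<And>i. distributed M lborel (\<lambda>\<omega>. Y \<omega> $ i) (normal_density (\<mu> $ i) \<sigma>)"
  shows "distributed M lborel (\<lambda>\<omega>. a \<bullet> Y \<omega>) (normal_density (a \<bullet> \<mu>) (\<sigma> * norm a))"
proof -
  define I where "I = {i. a $ i \<noteq> 0}"
  have "I \<noteq> {}"
    using \<open>a \<noteq> 0\<close> by (auto simp: I_def vec_eq_iff)
  have inner_I: "a \<bullet> v = (\<Sum>i\<in>I. a $ i * v $ i)" for v :: "real^'m"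
    unfolding inner_vec_def inner_real_def by (rule sum.mono_neutral_right) (auto simp: I_def)
  have "distributed M lborel (\<lambda>\<omega>. \<Sum>i\<in>I. a $ i * Y \<omega> $ i)
      (normal_density (\<Sum>i\<in>I. a $ i * \<mu> $ i) (sqrt (\<Sum>i\<in>I. (\<bar>a $ i\<bar> * \<sigma>)\<^sup>2)))"
  proof (rule sum_indep_normal)
    show "indep_vars (\<lambda>_. borel) (\<lambda>i \<omega>. a $ i * Y \<omega> $ i) I"
      using indep_vars_compose2[OF indep_vars_subset[OF indep, of I], of "\<lambda>i v. a $ i * v" "\<lambda>_. borel"]
      by simp
    show "distributed M lborel (\<lambda>\<omega>. a $ i * Y \<omega> $ i) (normal_density (a $ i * \<mu> $ i) (\<bar>a $ i\<bar> * \<sigma>))"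
      if "i \<in> I" for i
      using normal_density_affine[OF normal \<sigma>, of "a $ i" 0] that by (simp add: I_def)
  qed (use \<open>I \<noteq> {}\<close> \<sigma> in \<open>auto simp: I_def\<close>)
  moreover have "(\<Sum>i\<in>I. (\<bar>a $ i\<bar> * \<sigma>)\<^sup>2) = \<sigma>\<^sup>2 * (a \<bullet> a)"
    by (simp add: inner_I power_mult_distrib power2_eq_square sum_distrib_left mult_ac)
  then have "sqrt (\<Sum>i\<in>I. (\<bar>a $ i\<bar> * \<sigma>)\<^sup>2) = \<sigma> * norm a"
    using \<sigma> by (simp add: norm_eq_sqrt_inner real_sqrt_mult)
  ultimately show ?thesis
    by (simp add: inner_I)
qed

lemma distributed_sum_inner_iid_normal:
  fixes Y :: "nat \<Rightarrow> 'a \<Rightarrow> real^'m" and a \<mu> :: "real^'m"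
  assumes \<sigma>: "\<sigma> > 0" and "a \<noteq> 0" and I: "finite I" "I \<noteq> {}"
    and indep: "indep_vars (\<lambda>_. borel) Y I"
    and indep_comp: "\<And>l. l \<in> I \<Longrightarrow> indep_vars (\<lambda>_. borel) (\<lambda>i \<omega>. Y l \<omega> $ i) UNIV"
    and normal: "\<And>l i. l \<in> I \<Longrightarrow> distributed M lborel (\<lambda>\<omega>. Y l \<omega> $ i) (normal_density (\<mu> $ i) \<sigma>)"
  shows "distributed M lborel (\<lambda>\<omega>. \<Sum>l\<in>I. a \<bullet> Y l \<omega>)
           (normal_density (real (card I) * (a \<bullet> \<mu>)) (sqrt (real (card I)) * \<sigma> * norm a))"
proof -
  have "distributed M lborel (\<lambda>\<omega>. \<Sum>l\<in>I. a \<bullet> Y l \<omega>)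
     (normal_density (\<Sum>l\<in>I. a \<bullet> \<mu>) (sqrt (\<Sum>l\<in>I. (\<sigma> * norm a)\<^sup>2)))"
  proof (rule sum_indep_normal[OF I])
    show "indep_vars (\<lambda>_. borel) (\<lambda>l \<omega>. a \<bullet> Y l \<omega>) I"
      using indep_vars_compose2[OF indep, of "\<lambda>_ v. a \<bullet> v" "\<lambda>_. borel"] by simp
  qed (use \<sigma> \<open>a \<noteq> 0\<close> distributed_inner_indep_normal[OF \<sigma> \<open>a \<noteq> 0\<close> indep_comp normal] in auto)
  then show ?thesis
    using \<sigma> by (simp add: real_sqrt_mult mult.assoc)
qed

lemma measure_indep_rv:
  assumes "indep_rv M S X R Y" and "A \<in> sets S" and "B \<in> sets R"
  shows "prob {\<omega>\<in>space M. X \<omega> \<in> A \<and> Y \<omega> \<in> B}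
       = prob {\<omega>\<in>space M. X \<omega> \<in> A} * prob {\<omega>\<in>space M. Y \<omega> \<in> B}"
proof -
  have "indep_set (sigma_sets (space M) {X -` A \<inter> space M | A. A \<in> sets S})
          (sigma_sets (space M) {Y -` B \<inter> space M | B. B \<in> sets R})"
    using assms(1) by (simp add: indep_rv_def)
  then have "prob ((X -` A \<inter> space M) \<inter> (Y -` B \<inter> space M))
           = prob (X -` A \<inter> space M) * prob (Y -` B \<inter> space M)"
    by (rule indep_setD[OF _ sigma_sets.Basic sigma_sets.Basic]) (use assms in auto)
  moreover have "(X -` A \<inter> space M) \<inter> (Y -` B \<inter> space M) = {\<omega>\<in>space M. X \<omega> \<in> A \<and> Y \<omega> \<in> B}"
    by auto
  ultimately show ?thesis
    by (simp add: Int_def conj_commute)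
qed

lemma indep_rvI:
  assumes X: "X \<in> measurable M S" and Y: "Y \<in> measurable M R"
    and prod: "\<And>A B. A \<in> sets S \<Longrightarrow> B \<in> sets R \<Longrightarrow>
      prob {\<omega>\<in>space M. X \<omega> \<in> A \<and> Y \<omega> \<in> B}
      = prob {\<omega>\<in>space M. X \<omega> \<in> A} * prob {\<omega>\<in>space M. Y \<omega> \<in> B}"
  shows "indep_rv M S X R Y"
  unfolding indep_rv_def
proof (intro conjI X Y indep_set_sigma_sets[OF _ Int_stable_vimage Int_stable_vimage] indep_setI)
  show "{X -` A \<inter> space M | A. A \<in> sets S} \<subseteq> events"
    using measurable_sets[OF X] by auto
  show "{Y -` B \<inter> space M | B. B \<in> sets R} \<subseteq> events"
    using measurable_sets[OF Y] by auto
  fix a b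
  assume "a \<in> {X -` A \<inter> space M | A. A \<in> sets S}" "b \<in> {Y -` B \<inter> space M | B. B \<in> sets R}"
  then obtain A B where "A \<in> sets S" "a = {\<omega>\<in>space M. X \<omega> \<in> A}"
    and "B \<in> sets R" "b = {\<omega>\<in>space M. Y \<omega> \<in> B}"
    by blast
  moreover from this have "a \<inter> b = {\<omega>\<in>space M. X \<omega> \<in> A \<and> Y \<omega> \<in> B}"
    by auto
  ultimately show "prob (a \<inter> b) = prob a * prob b"
    using prod by simp
qed

lemma sums_integral_countable_index:
  fixes K :: "'a \<Rightarrow> nat" and c :: "nat \<Rightarrow> real"
  assumes K: "K \<in> measurable M (count_space UNIV)" and E: "E \<in> events"
    and c: "\<And>k. \<bar>c k\<bar> \<le> C"
  shows "(\<lambda>k. prob {\<omega>\<in>E. K \<omega> = k} * c k) sums (\<integral>\<omega>. indicator E \<omega> * c (K \<omega>) \<partial>M)"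
proof -
  define F where "F k = {\<omega>\<in>E. K \<omega> = k}" for k
  have F_events: "F k \<in> events" for k
  proof -
    have "F k = E \<inter> (K -` {k} \<inter> space M)"
      using sets.sets_into_space[OF E] by (auto simp: F_def)
    then show ?thesis
      using E measurable_sets[OF K, of "{k}"] by auto
  qed
  have "disjoint_family F"
    by (auto simp: disjoint_family_on_def F_def)
  then have summable_prob: "summable (\<lambda>k. prob (F k))"
    using finite_measure_UNION[of F] F_events by (auto simp: sums_iff)
  define f where "f k \<omega> = indicator (F k) \<omega> * c k" for k \<omega>
  have f_single: "f k \<omega> = (if k = K \<omega> then indicator E \<omega> * c (K \<omega>) else 0)" for k \<omega>
    by (auto simp: f_def F_def indicator_def)
  have integral_norm: "(\<integral>\<omega>. \<bar>f k \<omega>\<bar> \<partial>M) = prob (F k) * \<bar>c k\<bar>" for k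
    using F_events by (simp add: f_def abs_mult)
  have "(\<lambda>k. integral\<^sup>L M (f k)) sums (\<integral>\<omega>. (\<Sum>k. f k \<omega>) \<partial>M)"
  proof (rule sums_integral)
    show "integrable M (f k)" for k
      unfolding f_def using F_events
      by (intro integrable_mult_left integrable_real_indicator) (auto simp: emeasure_eq_measure)
    show "AE \<omega> in M. summable (\<lambda>k. norm (f k \<omega>))"
    proof (rule AE_I2)
      fix \<omega>
      have "(\<lambda>k. norm (f k \<omega>)) = (\<lambda>k. if k = K \<omega> then \<bar>indicator E \<omega> * c (K \<omega>)\<bar> else 0)"
        by (intro ext) (simp add: f_single)
      then show "summable (\<lambda>k. norm (f k \<omega>))"
        by (simp only: summable_single)
    qed
    show "summable (\<lambda>k. \<integral>\<omega>. norm (f k \<omega>) \<partial>M)"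
    proof (rule summable_comparison_test'[OF summable_mult2[OF summable_prob, of C]])
      show "norm (\<integral>\<omega>. norm (f k \<omega>) \<partial>M) \<le> prob (F k) * C" for k
        using c[of k] by (simp add: integral_norm mult_left_mono)
    qed
  qed
  moreover have "(\<Sum>k. f k \<omega>) = indicator E \<omega> * c (K \<omega>)" for \<omega>
    unfolding f_single using sums_single by (rule sums_unique[symmetric])
  moreover have "integral\<^sup>L M (f k) = prob (F k) * c k" for k
    using F_events by (simp add: f_def[abs_def])
  ultimately show ?thesis
    by (simp add: F_def)
qed

lemma sums_prob_indep_mixture:
  fixes g :: "'t \<Rightarrow> nat"
  assumes TW: "indep_rv M ST T MW W" and g: "g \<in> measurable ST (count_space UNIV)"
    and G: "\<And>k. G k \<in> measurable MW R" and A: "A \<in> sets ST" and B: "B \<in> sets R"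
  shows "(\<lambda>k. prob {\<omega>\<in>space M. T \<omega> \<in> A \<and> g (T \<omega>) = k} * prob {\<omega>\<in>space M. G k (W \<omega>) \<in> B})
    sums prob {\<omega>\<in>space M. T \<omega> \<in> A \<and> G (g (T \<omega>)) (W \<omega>) \<in> B}"
proof -
  have T: "T \<in> measurable M ST" and W: "W \<in> measurable M MW"
    using TW by (simp_all add: indep_rv_def)
  define E where "E k = {\<omega>\<in>space M. T \<omega> \<in> A \<and> g (T \<omega>) = k \<and> G k (W \<omega>) \<in> B}" for k
  have A_k: "A \<inter> (g -` {k} \<inter> space ST) \<in> sets ST" for k
    using A measurable_sets[OF g, of "{k}"] by auto
  have B_k: "G k -` B \<inter> space MW \<in> sets MW" for k
    using measurable_sets[OF G B] .
  have E_eq: "E k = {\<omega>\<in>space M. T \<omega> \<in> A \<inter> (g -` {k} \<inter> space ST) \<and> W \<omega> \<in> G k -` B \<inter> space MW}" for k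
    using measurable_space[OF T] measurable_space[OF W] by (auto simp: E_def)
  have "E k = (T -` (A \<inter> (g -` {k} \<inter> space ST)) \<inter> space M) \<inter> (W -` (G k -` B \<inter> space MW) \<inter> space M)" for k
    unfolding E_eq by auto
  then have "range E \<subseteq> events"
    using measurable_sets[OF T A_k] measurable_sets[OF W B_k] by auto
  moreover have "disjoint_family E"
    by (auto simp: disjoint_family_on_def E_def)
  moreover have "(\<Union>k. E k) = {\<omega>\<in>space M. T \<omega> \<in> A \<and> G (g (T \<omega>)) (W \<omega>) \<in> B}"
    by (auto simp: E_def)
  moreover have "prob (E k) = prob {\<omega>\<in>space M. T \<omega> \<in> A \<and> g (T \<omega>) = k} * prob {\<omega>\<in>space M. G k (W \<omega>) \<in> B}" for k
  proof -
    have "{\<omega>\<in>space M. T \<omega> \<in> A \<inter> (g -` {k} \<inter> space ST)} = {\<omega>\<in>space M. T \<omega> \<in> A \<and> g (T \<omega>) = k}"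
      using measurable_space[OF T] by auto
    moreover have "{\<omega>\<in>space M. W \<omega> \<in> G k -` B \<inter> space MW} = {\<omega>\<in>space M. G k (W \<omega>) \<in> B}"
      using measurable_space[OF W] by auto
    ultimately show ?thesis
      unfolding E_eq using measure_indep_rv[OF TW A_k B_k] by simp
  qed
  ultimately show ?thesis
    using finite_measure_UNION[of E] by simp
qed

lemma prob_indep_mixture:
  fixes g :: "'t \<Rightarrow> nat"
  assumes TW: "indep_rv M ST T MW W" and g: "g \<in> measurable ST (count_space UNIV)"
    and G: "\<And>k. G k \<in> measurable MW R"
    and Z: "\<And>\<omega> \<omega>'. \<omega> \<in> space M \<Longrightarrow> \<omega>' \<in> space M \<Longrightarrow> Z (g (T \<omega>)) \<omega>' = G (g (T \<omega>)) (W \<omega>')"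
    and A: "A \<in> sets ST" and B: "B \<in> sets R"
  shows "prob {\<omega>\<in>space M. T \<omega> \<in> A \<and> Z (g (T \<omega>)) \<omega> \<in> B}
       = (\<integral>\<omega>. indicator A (T \<omega>) * prob {\<omega>'\<in>space M. Z (g (T \<omega>)) \<omega>' \<in> B} \<partial>M)"
proof -
  have T: "T \<in> measurable M ST"
    using TW by (simp add: indep_rv_def)
  define E where "E = {\<omega>\<in>space M. T \<omega> \<in> A}"
  have E_events: "E \<in> events"
    using measurable_sets[OF T A] by (simp add: E_def vimage_def Int_def conj_commute)
  have "(\<lambda>k. prob {\<omega>\<in>E. g (T \<omega>) = k} * prob {\<omega>\<in>space M. G k (W \<omega>) \<in> B})
      sums (\<integral>\<omega>. indicator E \<omega> * prob {\<omega>'\<in>space M. G (g (T \<omega>)) (W \<omega>') \<in> B} \<partial>M)"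
    by (rule sums_integral_countable_index[OF _ E_events, where C=1])
       (use measurable_comp[OF T g] in \<open>simp_all add: comp_def\<close>)
  moreover have "{\<omega>\<in>E. g (T \<omega>) = k} = {\<omega>\<in>space M. T \<omega> \<in> A \<and> g (T \<omega>) = k}" for k
    by (auto simp: E_def)
  moreover have "(\<integral>\<omega>. indicator E \<omega> * prob {\<omega>'\<in>space M. G (g (T \<omega>)) (W \<omega>') \<in> B} \<partial>M)
      = (\<integral>\<omega>. indicator A (T \<omega>) * prob {\<omega>'\<in>space M. Z (g (T \<omega>)) \<omega>' \<in> B} \<partial>M)"
  proof (intro Bochner_Integration.integral_cong refl)
    fix \<omega> assume "\<omega> \<in> space M"
    then have "{\<omega>'\<in>space M. Z (g (T \<omega>)) \<omega>' \<in> B} = {\<omega>'\<in>space M. G (g (T \<omega>)) (W \<omega>') \<in> B}"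
      using Z by auto
    with \<open>\<omega> \<in> space M\<close> show "indicator E \<omega> * prob {\<omega>'\<in>space M. G (g (T \<omega>)) (W \<omega>') \<in> B}
        = indicator A (T \<omega>) * prob {\<omega>'\<in>space M. Z (g (T \<omega>)) \<omega>' \<in> B}"
      by (simp add: E_def indicator_def)
  qed
  moreover have "{\<omega>\<in>space M. T \<omega> \<in> A \<and> Z (g (T \<omega>)) \<omega> \<in> B}
      = {\<omega>\<in>space M. T \<omega> \<in> A \<and> G (g (T \<omega>)) (W \<omega>) \<in> B}"
    using Z by auto
  ultimately show ?thesis
    using sums_unique2[OF sums_prob_indep_mixture[OF TW g G A B]] by simp
qed

lemma indep_rv_distr_mixture:
  fixes g :: "'t \<Rightarrow> nat"
  assumes TW: "indep_rv M ST T MW W" and g: "g \<in> measurable ST (count_space UNIV)"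
    and G: "\<And>k. G k \<in> measurable MW R"
    and Z: "\<And>\<omega> \<omega>'. \<omega> \<in> space M \<Longrightarrow> \<omega>' \<in> space M \<Longrightarrow> Z (g (T \<omega>)) \<omega>' = G (g (T \<omega>)) (W \<omega>')"
    and law: "\<And>\<omega>. \<omega> \<in> space M \<Longrightarrow> distr M R (Z (g (T \<omega>))) = \<nu>"
  shows "indep_rv M R (\<lambda>\<omega>. Z (g (T \<omega>)) \<omega>) ST T" and "distr M R (\<lambda>\<omega>. Z (g (T \<omega>)) \<omega>) = \<nu>"
proof -
  have T: "T \<in> measurable M ST" and W: "W \<in> measurable M MW"
    using TW by (simp_all add: indep_rv_def)
  have Z_meas: "Z (g (T \<omega>)) \<in> measurable M R" if "\<omega> \<in> space M" for \<omega>
    using measurable_compose[OF W G] by (subst measurable_cong[OF Z[OF that]])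
  have "(\<lambda>\<omega>. G (g (T \<omega>)) (W \<omega>)) \<in> measurable M R"
    by (rule measurable_compose_countable'[where I=UNIV, OF _ measurable_comp[OF T g, unfolded comp_def]])
       (auto intro: measurable_compose[OF W G])
  then have mixture_meas: "(\<lambda>\<omega>. Z (g (T \<omega>)) \<omega>) \<in> measurable M R"
    by (subst measurable_cong[where g="\<lambda>\<omega>. G (g (T \<omega>)) (W \<omega>)"]) (simp_all add: Z)
  have law_prob: "prob {\<omega>'\<in>space M. Z (g (T \<omega>)) \<omega>' \<in> B} = measure \<nu> B"
    if "\<omega> \<in> space M" and "B \<in> sets R" for \<omega> B
    using that Z_meas[OF that(1)] law[OF that(1), symmetric]
    by (simp add: measure_distr vimage_def Int_def conj_commute)
  have joint: "prob {\<omega>\<in>space M. T \<omega> \<in> A \<and> Z (g (T \<omega>)) \<omega> \<in> B} = prob {\<omega>\<in>space M. T \<omega> \<in> A} * measure \<nu> B"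
    if A: "A \<in> sets ST" and B: "B \<in> sets R" for A B
  proof -
    have "(\<integral>\<omega>. indicator A (T \<omega>) * prob {\<omega>'\<in>space M. Z (g (T \<omega>)) \<omega>' \<in> B} \<partial>M)
        = (\<integral>\<omega>. indicator {\<omega>\<in>space M. T \<omega> \<in> A} \<omega> * measure \<nu> B \<partial>M)"
      using law_prob[OF _ B] by (intro Bochner_Integration.integral_cong) (auto simp: indicator_def)
    also have "\<dots> = prob {\<omega>\<in>space M. T \<omega> \<in> A} * measure \<nu> B"
      using measurable_sets[OF T A] by (simp add: vimage_def Int_def conj_commute)
    finally show ?thesis
      using prob_indep_mixture[where Z=Z, OF TW g G Z A B] by simp
  qed
  have marginal: "prob {\<omega>\<in>space M. Z (g (T \<omega>)) \<omega> \<in> B} = measure \<nu> B" if "B \<in> sets R" for B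
    using joint[OF sets.top that] measurable_space[OF T] prob_space by (simp cong: conj_cong)
  show "indep_rv M R (\<lambda>\<omega>. Z (g (T \<omega>)) \<omega>) ST T"
  proof (rule indep_rvI[OF mixture_meas T])
    fix B A assume "B \<in> sets R" "A \<in> sets ST"
    moreover have "{\<omega>\<in>space M. Z (g (T \<omega>)) \<omega> \<in> B \<and> T \<omega> \<in> A}
        = {\<omega>\<in>space M. T \<omega> \<in> A \<and> Z (g (T \<omega>)) \<omega> \<in> B}"
      by auto
    ultimately show "prob {\<omega>\<in>space M. Z (g (T \<omega>)) \<omega> \<in> B \<and> T \<omega> \<in> A}
        = prob {\<omega>\<in>space M. Z (g (T \<omega>)) \<omega> \<in> B} * prob {\<omega>\<in>space M. T \<omega> \<in> A}"
      using joint marginal by simp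
  qed
  obtain \<omega>\<^sub>0 where \<omega>\<^sub>0: "\<omega>\<^sub>0 \<in> space M"
    using not_empty by blast
  have \<nu>_prob: "prob_space \<nu>"
    using prob_space_distr[OF Z_meas[OF \<omega>\<^sub>0]] law[OF \<omega>\<^sub>0] by simp
  show "distr M R (\<lambda>\<omega>. Z (g (T \<omega>)) \<omega>) = \<nu>"
  proof (rule measure_eqI)
    show "sets (distr M R (\<lambda>\<omega>. Z (g (T \<omega>)) \<omega>)) = sets \<nu>"
      using law[OF \<omega>\<^sub>0] by auto
    fix B assume "B \<in> sets (distr M R (\<lambda>\<omega>. Z (g (T \<omega>)) \<omega>))"
    then have B: "B \<in> sets R"
      by simp
    have "emeasure (distr M R (\<lambda>\<omega>. Z (g (T \<omega>)) \<omega>)) B = prob {\<omega>\<in>space M. Z (g (T \<omega>)) \<omega> \<in> B}"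
      using mixture_meas B by (simp add: emeasure_distr emeasure_eq_measure vimage_def Int_def conj_commute)
    also have "\<dots> = emeasure \<nu> B"
      using marginal[OF B] finite_measure.emeasure_eq_measure[OF prob_space.finite_measure[OF \<nu>_prob]] by simp
    finally show "emeasure (distr M R (\<lambda>\<omega>. Z (g (T \<omega>)) \<omega>)) B = emeasure \<nu> B" .
  qed
qed

lemma distributed_inner_betahat:
  fixes X :: "real^'d^'m" and Y :: "nat \<Rightarrow> 'a \<Rightarrow> real^'m" and x \<beta> :: "real^'d"
  assumes XX: "invertible (transpose X ** X)" and \<sigma>: "\<sigma> > 0" and k: "1 \<le> k" and x: "x \<noteq> 0"
    and indep: "indep_vars (\<lambda>_. borel) Y {1..}"
    and indep_comp: "\<And>l. 1 \<le> l \<Longrightarrow> indep_vars (\<lambda>_. borel) (\<lambda>i \<omega>. Y l \<omega> $ i) UNIV"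
    and normal: "\<And>l i. 1 \<le> l \<Longrightarrow> distributed M lborel (\<lambda>\<omega>. Y l \<omega> $ i) (normal_density ((X *v \<beta>) $ i) \<sigma>)"
  shows "distributed M lborel (\<lambda>\<omega>. x \<bullet> betahat X Y k \<omega>)
      (normal_density (x \<bullet> \<beta>) (sqrt (\<sigma>\<^sup>2 / real k * (x \<bullet> (matrix_inv (transpose X ** X) *v x)))))"
proof -
  define L where "L = matrix_inv (transpose X ** X) ** transpose X"
  define a where "a = x v* L"
  have "a \<noteq> 0"
    using least_squares_row_nonzero[OF XX x] by (simp add: a_def L_def)
  have betahat_eq: "x \<bullet> betahat X Y k \<omega> = 1 / real k * (\<Sum>l\<in>{1..k}. a \<bullet> Y l \<omega>)" for \<omega>
    by (simp add: betahat_def L_def[symmetric] a_def dot_lmul_matrix[symmetric] inner_sum_right)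
  have mean: "a \<bullet> (X *v \<beta>) = x \<bullet> \<beta>"
    using least_squares_left_inverse[OF XX]
    by (simp add: a_def L_def dot_lmul_matrix matrix_vector_mul_assoc)
  have "norm a = sqrt (x \<bullet> (matrix_inv (transpose X ** X) *v x))"
    using least_squares_row_norm[OF XX] by (simp add: a_def L_def norm_eq_sqrt_inner)
  then have deviation: "\<bar>1 / real k\<bar> * (sqrt (real k) * \<sigma> * norm a)
      = sqrt (\<sigma>\<^sup>2 / real k * (x \<bullet> (matrix_inv (transpose X ** X) *v x)))"
    using \<sigma> k by (simp add: real_sqrt_mult real_sqrt_divide field_simps)
  have "distributed M lborel (\<lambda>\<omega>. \<Sum>l\<in>{1..k}. a \<bullet> Y l \<omega>)
      (normal_density (real k * (x \<bullet> \<beta>)) (sqrt (real k) * \<sigma> * norm a))"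
    using distributed_sum_inner_iid_normal[OF \<sigma> \<open>a \<noteq> 0\<close>, of "{1..k}" Y "X *v \<beta>"]
      indep_vars_subset[OF indep, of "{1..k}"] indep_comp normal k
    by (simp add: mean)
  then have "distributed M lborel (\<lambda>\<omega>. 0 + 1 / real k * (\<Sum>l\<in>{1..k}. a \<bullet> Y l \<omega>))
      (normal_density (0 + 1 / real k * (real k * (x \<bullet> \<beta>))) (\<bar>1 / real k\<bar> * (sqrt (real k) * \<sigma> * norm a)))"
    by (rule normal_density_affine) (use \<sigma> k \<open>a \<noteq> 0\<close> in auto)
  moreover have "0 + 1 / real k * (real k * (x \<bullet> \<beta>)) = x \<bullet> \<beta>"
    using k by simp
  ultimately show ?thesis
    by (simp only: betahat_eq deviation add_0_left)
qed

lemma distributed_standardized_inner_betahat: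
  fixes X :: "real^'d^'m" and Y :: "nat \<Rightarrow> 'a \<Rightarrow> real^'m" and x \<beta> :: "real^'d"
  assumes XX: "invertible (transpose X ** X)" and \<sigma>: "\<sigma> > 0" and k: "1 \<le> k" and x: "x \<noteq> 0"
    and indep: "indep_vars (\<lambda>_. borel) Y {1..}"
    and indep_comp: "\<And>l. 1 \<le> l \<Longrightarrow> indep_vars (\<lambda>_. borel) (\<lambda>i \<omega>. Y l \<omega> $ i) UNIV"
    and normal: "\<And>l i. 1 \<le> l \<Longrightarrow> distributed M lborel (\<lambda>\<omega>. Y l \<omega> $ i) (normal_density ((X *v \<beta>) $ i) \<sigma>)"
  shows "distributed M lborel
      (\<lambda>\<omega>. sqrt (real k) * (x \<bullet> betahat X Y k \<omega> - x \<bullet> \<beta>)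
            / (\<sigma> * sqrt (x \<bullet> (matrix_inv (transpose X ** X) *v x))))
      std_normal_density"
proof -
  define q where "q = x \<bullet> (matrix_inv (transpose X ** X) *v x)"
  have "q > 0"
    unfolding q_def using XX x by (rule inner_matrix_inv_gram_pos)
  have sd: "sqrt (\<sigma>\<^sup>2 / real k * q) = \<sigma> * sqrt q / sqrt (real k)"
    using \<sigma> by (simp add: real_sqrt_mult real_sqrt_divide)
  have "distributed M lborel (\<lambda>\<omega>. (x \<bullet> betahat X Y k \<omega> - x \<bullet> \<beta>) / sqrt (\<sigma>\<^sup>2 / real k * q)) std_normal_density"
    using distributed_inner_betahat[OF assms] normal_standard_normal_convert[of "sqrt (\<sigma>\<^sup>2 / real k * q)"]
      \<sigma> k \<open>q > 0\<close> by (simp add: q_def)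
  moreover have "(v - x \<bullet> \<beta>) / sqrt (\<sigma>\<^sup>2 / real k * q) = sqrt (real k) * (v - x \<bullet> \<beta>) / (\<sigma> * sqrt q)" for v
    unfolding sd by simp
  ultimately show ?thesis
    by (simp add: q_def)
qed

end

lemma sum_atLeastAtMost_split_shift:
  fixes f :: "nat \<Rightarrow> 'a::comm_monoid_add"
  assumes "n \<le> k"
  shows "(\<Sum>l\<in>{1..k}. f l) = (\<Sum>l\<in>{1..n}. f l) + (\<Sum>j\<in>{1..k-n}. f (n + j))"
proof -
  have "(\<Sum>l\<in>{1..n + (k-n)}. f l) = (\<Sum>l\<in>{1..n}. f l) + (\<Sum>l\<in>{n+1..n + (k-n)}. f l)"
    by (rule sum.ub_add_nat) simp
  also have "(\<Sum>l\<in>{n+1..n + (k-n)}. f l) = (\<Sum>j\<in>{1..k-n}. f (n + j))"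
    using sum.shift_bounds_cl_nat_ivl[of f 1 n "k-n"] by (simp add: add.commute)
  finally show ?thesis
    using assms by simp
qed

text \<open>The argument w stands for the sequence W = (Y_1 + ... + Y_n, Y_(n+1), Y_(n+2), ...).\<close>

definition inner_betahat_of_blocks ::
    "real^'d^'m \<Rightarrow> real^'d \<Rightarrow> nat \<Rightarrow> nat \<Rightarrow> (nat \<Rightarrow> real^'m) \<Rightarrow> real" where
  "inner_betahat_of_blocks X x n k w =
     (x v* (matrix_inv (transpose X ** X) ** transpose X))
       \<bullet> ((1 / real k) *\<^sub>R (w 0 + (\<Sum>j\<in>{1..k-n}. w j)))"

lemma inner_betahat_eq_of_blocks:
  assumes "n \<le> k"
  shows "x \<bullet> betahat X Y k \<omega>
       = inner_betahat_of_blocks X x n k (\<lambda>j. if j = 0 then \<Sum>l\<in>{1..n}. Y l \<omega> else Y (n + j) \<omega>)"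
  using sum_atLeastAtMost_split_shift[OF assms, of "\<lambda>l. Y l \<omega>"]
  by (simp add: inner_betahat_of_blocks_def betahat_def dot_lmul_matrix)

lemma inner_betahat_of_blocks_measurable [measurable]:
  "inner_betahat_of_blocks X x n k \<in> borel_measurable (PiM UNIV (\<lambda>_. borel))"
  unfolding inner_betahat_of_blocks_def by measurable

theorem lemma1:
  fixes M :: "'a measure"
    and X :: "real^'d^'m" and \<beta> :: "real^'d" and \<sigma> :: real
    and Y :: "nat \<Rightarrow> 'a \<Rightarrow> real^'m"
    and ST :: "'t measure" and T :: "'a \<Rightarrow> 't"
    and g :: "'t \<Rightarrow> nat" and n :: nat and x :: "real^'d"
  assumes P: "prob_space M"
    and nonsing: "invertible (transpose X ** X)"
    and sigma_pos: "\<sigma> > 0"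
    and n_pos: "n \<ge> 1"
    and Y_indep: "prob_space.indep_vars M (\<lambda>_. borel) Y {1..}"
    and Y_comp_indep: "\<And>l. l \<ge> 1 \<Longrightarrow> prob_space.indep_vars M (\<lambda>_. borel) (\<lambda>i \<omega>. Y l \<omega> $ i) UNIV"
    and Y_comp_normal: "\<And>l i. l \<ge> 1 \<Longrightarrow>
          distributed M lborel (\<lambda>\<omega>. Y l \<omega> $ i) (normal_density ((X *v \<beta>) $ i) \<sigma>)"
    and T_indep: "indep_rv M ST T (PiM UNIV (\<lambda>_::nat. borel :: (real^'m) measure))
          (\<lambda>\<omega> k. if k = 0 then (\<Sum>l\<in>{1..n}. Y l \<omega>) else Y (n + k) \<omega>)"
    and g_meas: "g \<in> measurable ST (count_space UNIV)"
    and N_ge: "\<And>\<omega>. \<omega> \<in> space M \<Longrightarrow> g (T \<omega>) \<ge> n"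
    and x_nz: "x \<noteq> 0"
  shows
    "(\<forall>A \<in> sets ST. \<forall>B \<in> sets (borel :: real measure).
        measure M {\<omega> \<in> space M. T \<omega> \<in> A \<and> x \<bullet> betahat X Y (g (T \<omega>)) \<omega> \<in> B}
        = (\<integral>\<omega>. indicator A (T \<omega>) *
              measure (normal_measure (x \<bullet> \<beta>)
                 (sqrt (\<sigma>\<^sup>2 / real (g (T \<omega>)) * (x \<bullet> (matrix_inv (transpose X ** X) *v x))))) B
           \<partial>M))
     \<and> indep_rv M borel
         (\<lambda>\<omega>. sqrt (real (g (T \<omega>))) * (x \<bullet> betahat X Y (g (T \<omega>)) \<omega> - x \<bullet> \<beta>)
               / (\<sigma> * sqrt (x \<bullet> (matrix_inv (transpose X ** X) *v x)))) ST T
     \<and> distributed M lborel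
         (\<lambda>\<omega>. sqrt (real (g (T \<omega>))) * (x \<bullet> betahat X Y (g (T \<omega>)) \<omega> - x \<bullet> \<beta>)
               / (\<sigma> * sqrt (x \<bullet> (matrix_inv (transpose X ** X) *v x))))
         std_normal_density"
proof -
  interpret prob_space M by (rule P)
  define q where "q = x \<bullet> (matrix_inv (transpose X ** X) *v x)"
  define W where "W = (\<lambda>\<omega> k. if k = 0 then (\<Sum>l\<in>{1..n}. Y l \<omega>) else Y (n + k) \<omega>)"
  define G where "G = inner_betahat_of_blocks X x n"
  have blocks: "x \<bullet> betahat X Y (g (T \<omega>)) \<omega>' = G (g (T \<omega>)) (W \<omega>')" if "\<omega> \<in> space M" for \<omega> \<omega>'
    unfolding G_def W_def by (rule inner_betahat_eq_of_blocks[OF N_ge[OF that]])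
  have N_pos: "1 \<le> g (T \<omega>)" if "\<omega> \<in> space M" for \<omega>
    using N_ge[OF that] n_pos by simp
  note law = distributed_inner_betahat
      [OF nonsing sigma_pos N_pos x_nz Y_indep Y_comp_indep Y_comp_normal]
  note std_law = distributed_standardized_inner_betahat
      [OF nonsing sigma_pos N_pos x_nz Y_indep Y_comp_indep Y_comp_normal]
  have part1: "prob {\<omega>\<in>space M. T \<omega> \<in> A \<and> x \<bullet> betahat X Y (g (T \<omega>)) \<omega> \<in> B}
      = (\<integral>\<omega>. indicator A (T \<omega>) *
          measure (normal_measure (x \<bullet> \<beta>) (sqrt (\<sigma>\<^sup>2 / real (g (T \<omega>)) * q))) B \<partial>M)"
    if A: "A \<in> sets ST" and B: "B \<in> sets (borel :: real measure)" for A B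
  proof -
    have "prob {\<omega>\<in>space M. T \<omega> \<in> A \<and> x \<bullet> betahat X Y (g (T \<omega>)) \<omega> \<in> B}
        = (\<integral>\<omega>. indicator A (T \<omega>) * prob {\<omega>'\<in>space M. x \<bullet> betahat X Y (g (T \<omega>)) \<omega>' \<in> B} \<partial>M)"
      by (rule prob_indep_mixture[where G=G, OF T_indep[folded W_def] g_meas _ blocks A B])
         (simp add: G_def)
    also have "\<dots> = (\<integral>\<omega>. indicator A (T \<omega>) *
        measure (normal_measure (x \<bullet> \<beta>) (sqrt (\<sigma>\<^sup>2 / real (g (T \<omega>)) * q))) B \<partial>M)"
      using measure_distributed_normal[OF law B]
      by (intro Bochner_Integration.integral_cong) (simp_all add: q_def)
    finally show ?thesis .
  qed
  define Z where "Z k \<omega> = sqrt (real k) * (x \<bullet> betahat X Y k \<omega> - x \<bullet> \<beta>) / (\<sigma> * sqrt q)" for k \<omega>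
  have "indep_rv M lborel (\<lambda>\<omega>. Z (g (T \<omega>)) \<omega>) ST T"
    and "distr M lborel (\<lambda>\<omega>. Z (g (T \<omega>)) \<omega>) = density lborel std_normal_density"
    using indep_rv_distr_mixture[where G="\<lambda>k w. sqrt (real k) * (G k w - x \<bullet> \<beta>) / (\<sigma> * sqrt q)" and Z=Z,
        OF T_indep[folded W_def] g_meas] blocks std_law
    by (simp_all add: G_def Z_def[abs_def] q_def distributed_def)
  then show ?thesis
    using part1 by (auto simp: Z_def q_def indep_rv_def distributed_def)
qed

end
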